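(* Let $X,X_1,X_2,\dots$ be i.i.d. positive random variables with $\mathbb{E}X=1$, let $p\ge2$ be an integer, and suppose $\mathbb{E}X^p<\infty$. Let $1\le r\le p$ and let $\gamma=(\gamma_1,\dots,\gamma_r)$ be a tuple of positive integers with $\gamma_1+\dots+\gamma_r=p$. For $n>r$ put $S_r=X_1+\dots+X_r$, $S_{n,r}=X_{r+1}+\dots+X_n$ and $$\xi_n(\gamma)=\frac{X_1^{2\gamma_1}\cdots X_r^{2\gamma_r}}{\left(\frac1nS_r+\frac1nS_{n,r}\right)^p}.$$ Then, as $n\to\infty$, $$\mathbb{E}\xi_n(\gamma)\le 4^p\,\mathbb{E}\frac{X_1^{2\gamma_1}\cdots X_r^{2\gamma_r}}{\left(\frac1nS_r+1\right)^p}+o(1).$$ *)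

theory Defs
  imports "HOL-Probability.Probability"
begin

end

theory Submission
  imports Defs "HOL-Real_Asymp.Real_Asymp"
begin

(* Split according to whether the tail mean S_{n,r}/n is at least 1/2. If it is, the denominator
   is at least (S_r/n + 1)/2, which gives the main term with constant 2^p. If it is not, the ratio
   is at most n^p X_1^{gamma_1}...X_r^{gamma_r}, because X_1^{2 gamma_1}...X_r^{2 gamma_r} is at most
   X_1^{gamma_1}...X_r^{gamma_r} S_r^p, and the event S_{n,r} < n/2 is dominated by the Chernoff
   factor exp (t (n/2 - S_{n,r})). By independence the expectation of this bound factorizes, and
   E exp (-t X) <= 1 - t + t^2 E X^2 / 2 <= exp (-3t/4) for small t > 0, so the error term is
   O(n^p exp (-t n / 4)). *)

lemma power_le_one_plus_power:
  fixes x :: real assumes "0 \<le> x" "k \<le> p" shows "x ^ k \<le> 1 + x ^ p"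
proof (cases "x \<le> 1")
  case True
  then show ?thesis using assms power_le_one[of x k] zero_le_power[of x p] by linarith
next
  case False
  then have "x ^ k \<le> x ^ p" using assms by (intro power_increasing) auto
  then show ?thesis by simp
qed

lemma exp_neg_le_quadratic:
  fixes u :: real assumes "0 \<le> u" shows "exp (- u) \<le> 1 - u + u^2/2"
proof -
  have lower: "1 + u + u^2/2 \<le> exp u" using exp_lower_Taylor_quadratic[OF assms] .
  have pos: "0 < 1 + u + u^2/2" using assms by (simp add: add_pos_nonneg)
  have "(1 + u + u^2/2) * (1 - u + u^2/2) = 1 + u^4/4"
    by (simp add: algebra_simps power2_eq_square power4_eq_xxxx)
  then have prod_ge: "1 \<le> (1 + u + u^2/2) * (1 - u + u^2/2)" by simp
  have "exp (- u) = 1 / exp u" by (simp add: exp_minus field_simps)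
  also have "\<dots> \<le> 1 / (1 + u + u^2/2)" using lower pos by (intro divide_left_mono) auto
  also have "\<dots> \<le> 1 - u + u^2/2" using prod_ge pos by (simp add: divide_le_eq mult.commute)
  finally show ?thesis .
qed

lemma prod_power_double_le:
  fixes x :: "'i \<Rightarrow> real" and \<gamma> :: "'i \<Rightarrow> nat"
  assumes "finite I" and nonneg: "\<And>i. i \<in> I \<Longrightarrow> 0 \<le> x i"
  shows "(\<Prod>i\<in>I. x i ^ (2 * \<gamma> i)) \<le> (\<Prod>i\<in>I. x i ^ \<gamma> i) * (\<Sum>i\<in>I. x i) ^ (\<Sum>i\<in>I. \<gamma> i)"
proof -
  have "(\<Prod>i\<in>I. x i ^ \<gamma> i) \<le> (\<Prod>i\<in>I. (\<Sum>j\<in>I. x j) ^ \<gamma> i)"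
  proof (rule prod_mono)
    fix i assume "i \<in> I"
    then have "x i \<le> (\<Sum>j\<in>I. x j)" using assms by (intro member_le_sum) auto
    then show "0 \<le> x i ^ \<gamma> i \<and> x i ^ \<gamma> i \<le> (\<Sum>j\<in>I. x j) ^ \<gamma> i"
      using nonneg \<open>i \<in> I\<close> by (simp add: power_mono)
  qed
  then have "(\<Prod>i\<in>I. x i ^ \<gamma> i) * (\<Prod>i\<in>I. x i ^ \<gamma> i)
      \<le> (\<Prod>i\<in>I. x i ^ \<gamma> i) * (\<Sum>i\<in>I. x i) ^ (\<Sum>i\<in>I. \<gamma> i)"
    using nonneg by (simp add: power_sum mult_left_mono prod_nonneg)
  then show ?thesis by (simp add: prod.distrib[symmetric] mult_2 power_add)
qed

lemma ratio_tail_split_le: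
  fixes P Q S T t :: real and n p :: nat
  assumes "0 \<le> P" "0 \<le> Q" "0 < S" "0 \<le> T" "0 < n" "0 < t" and PQ: "P \<le> Q * S ^ p"
  shows "P / (S / n + T / n) ^ p
    \<le> 2 ^ p * (P / (S / n + 1) ^ p) + real n ^ p * exp (t * n / 2) * (Q * exp (- t * T))"
proof (cases "1/2 \<le> T / n")
  case True
  have "0 < S / n" using assms by simp
  have half: "(a + 1) / 2 \<le> a + b" if "0 < a" "1/2 \<le> b" for a b :: real
    using that by (simp add: field_simps)
  have "(S / n + 1) / 2 \<le> S / n + T / n" using \<open>0 < S / n\<close> True by (rule half)
  moreover have "0 < (S / n + 1) / 2" using \<open>0 < S / n\<close> by simp
  moreover have "0 < S / n + T / n" using \<open>0 < S / n\<close> assms by (simp add: add_pos_nonneg)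
  ultimately have "P / (S / n + T / n) ^ p \<le> P / ((S / n + 1) / 2) ^ p"
    using \<open>0 \<le> P\<close> by (intro divide_left_mono power_mono mult_pos_pos zero_less_power) auto
  also have "\<dots> = 2 ^ p * (P / (S / n + 1) ^ p)" by (simp add: power_divide)
  finally show ?thesis using assms by (simp add: add_increasing2)
next
  case False
  then have "1 \<le> exp (t * n / 2) * exp (- t * T)"
    using assms by (simp add: exp_add[symmetric] field_simps)
  then have "Q * 1 \<le> Q * (exp (t * n / 2) * exp (- t * T))"
    using \<open>0 \<le> Q\<close> by (rule mult_left_mono)
  then have Q_le: "Q \<le> exp (t * n / 2) * (Q * exp (- t * T))" by (simp add: ac_simps)
  have "P / (S / n + T / n) ^ p \<le> P / (S / n) ^ p"
    using assms by (intro divide_left_mono power_mono mult_pos_pos zero_less_power) (auto simp: add_pos_nonneg)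
  also have "\<dots> = real n ^ p * (P / S ^ p)" by (simp add: power_divide)
  also have "\<dots> \<le> real n ^ p * Q" using PQ assms by (intro mult_left_mono) (auto simp: divide_le_eq)
  also have "\<dots> \<le> real n ^ p * exp (t * n / 2) * (Q * exp (- t * T))"
    using Q_le by (simp add: mult.assoc mult_left_mono)
  finally show ?thesis using assms by (simp add: add_increasing)
qed

lemma (in prob_space) integrable_power_le:
  fixes X :: "'a \<Rightarrow> real"
  assumes [measurable]: "X \<in> borel_measurable M" and "integrable M (\<lambda>\<omega>. X \<omega> ^ p)"
    and "\<And>\<omega>. \<omega> \<in> space M \<Longrightarrow> 0 \<le> X \<omega>" and "k \<le> p"
  shows "integrable M (\<lambda>\<omega>. X \<omega> ^ k)"
proof (rule Bochner_Integration.integrable_bound[where f="\<lambda>\<omega>. 1 + X \<omega> ^ p"])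
  show "AE \<omega> in M. norm (X \<omega> ^ k) \<le> norm (1 + X \<omega> ^ p)"
    using assms power_le_one_plus_power by (intro AE_I2) auto
qed (use assms in auto)

lemma (in prob_space) nn_integral_power_le:
  fixes X :: "'a \<Rightarrow> real"
  assumes [measurable]: "X \<in> borel_measurable M" and "integrable M (\<lambda>\<omega>. X \<omega> ^ p)"
    and "\<And>\<omega>. \<omega> \<in> space M \<Longrightarrow> 0 \<le> X \<omega>" and "k \<le> p"
  shows "(\<integral>\<^sup>+\<omega>. ennreal (X \<omega> ^ k) \<partial>M) \<le> ennreal (1 + expectation (\<lambda>\<omega>. X \<omega> ^ p))"
proof -
  have "(\<integral>\<^sup>+\<omega>. ennreal (X \<omega> ^ k) \<partial>M) \<le> (\<integral>\<^sup>+\<omega>. ennreal (1 + X \<omega> ^ p) \<partial>M)"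
    using assms power_le_one_plus_power by (intro nn_integral_mono ennreal_leI) auto
  also have "\<dots> = ennreal (expectation (\<lambda>\<omega>. 1 + X \<omega> ^ p))"
    using assms by (intro nn_integral_eq_integral AE_I2) (auto simp: add_nonneg_nonneg)
  finally show ?thesis using assms by (simp add: prob_space)
qed

lemma (in prob_space) nn_integral_exp_neg_le:
  fixes X :: "'a \<Rightarrow> real"
  assumes [measurable]: "X \<in> borel_measurable M" and "\<And>\<omega>. \<omega> \<in> space M \<Longrightarrow> 0 \<le> X \<omega>"
    and "integrable M X" "integrable M (\<lambda>\<omega>. X \<omega> ^ 2)" and "0 \<le> t"
  shows "(\<integral>\<^sup>+\<omega>. ennreal (exp (- t * X \<omega>)) \<partial>M)
    \<le> ennreal (exp (- t * expectation X + t^2/2 * expectation (\<lambda>\<omega>. X \<omega> ^ 2)))"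
proof -
  define q where "q \<omega> = 1 - t * X \<omega> + t^2/2 * X \<omega> ^ 2" for \<omega>
  have q_nonneg: "0 \<le> q \<omega>" for \<omega>
  proof -
    have "0 \<le> ((t * X \<omega> - 1)^2 + 1) / 2" by simp
    also have "\<dots> = q \<omega>" by (simp add: q_def power2_eq_square field_simps)
    finally show ?thesis .
  qed
  have "(\<integral>\<^sup>+\<omega>. ennreal (exp (- t * X \<omega>)) \<partial>M) \<le> (\<integral>\<^sup>+\<omega>. ennreal (q \<omega>) \<partial>M)"
    using assms exp_neg_le_quadratic[of "t * X _"]
    by (intro nn_integral_mono ennreal_leI) (simp add: q_def power_mult_distrib)
  also have "\<dots> = ennreal (expectation q)"
    using assms q_nonneg by (intro nn_integral_eq_integral AE_I2) (auto simp: q_def)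
  also have "expectation q = 1 + (- t * expectation X + t^2/2 * expectation (\<lambda>\<omega>. X \<omega> ^ 2))"
    using assms by (simp add: q_def[abs_def] prob_space)
  also have "\<dots> \<le> exp (- t * expectation X + t^2/2 * expectation (\<lambda>\<omega>. X \<omega> ^ 2))"
    by (rule exp_ge_add_one_self)
  finally show ?thesis by (simp add: ennreal_leI)
qed

lemma (in prob_space) nn_integral_exp_neg_le_mean_one:
  fixes X :: "'a \<Rightarrow> real"
  assumes [measurable]: "X \<in> borel_measurable M" and "\<And>\<omega>. \<omega> \<in> space M \<Longrightarrow> 0 \<le> X \<omega>"
    and "integrable M X" "integrable M (\<lambda>\<omega>. X \<omega> ^ 2)" and "expectation X = 1"
    and "0 \<le> t" and small: "t * expectation (\<lambda>\<omega>. X \<omega> ^ 2) \<le> 1/2"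
  shows "(\<integral>\<^sup>+\<omega>. ennreal (exp (- t * X \<omega>)) \<partial>M) \<le> ennreal (exp (- (3 * t / 4)))"
proof -
  have "t^2/2 * expectation (\<lambda>\<omega>. X \<omega> ^ 2) \<le> t/4"
    using mult_left_mono[OF small \<open>0 \<le> t\<close>] by (simp add: power2_eq_square algebra_simps)
  then have "exp (- t * expectation X + t^2/2 * expectation (\<lambda>\<omega>. X \<omega> ^ 2)) \<le> exp (- (3 * t / 4))"
    unfolding \<open>expectation X = 1\<close> by (intro exp_mono) linarith
  with nn_integral_exp_neg_le[OF assms(1-4,6)] show ?thesis
    using ennreal_leI order_trans by blast
qed

lemma LIMSEQ_power_mult_exp_decay:
  fixes t C :: real assumes "0 < t"
  shows "(\<lambda>n. real n ^ p * exp (t * n / 2) * C * exp (- (3 * t / 4)) ^ (n - r)) \<longlonglongrightarrow> 0"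
proof (rule Lim_transform_eventually)
  show "(\<lambda>n. real n ^ p * exp (t * n / 2) * C * exp (- (3 * t / 4) * (real n - real r))) \<longlonglongrightarrow> 0"
    using assms by real_asymp
  show "\<forall>\<^sub>F n in sequentially. real n ^ p * exp (t * n / 2) * C * exp (- (3 * t / 4) * (real n - real r))
      = real n ^ p * exp (t * n / 2) * C * exp (- (3 * t / 4)) ^ (n - r)"
    using eventually_ge_at_top[of r]
    by eventually_elim (simp add: exp_of_nat_mult[symmetric] of_nat_diff mult_ac)
qed

lemma (in prob_space) nn_integral_prod_identically_distributed:
  fixes X :: "'i \<Rightarrow> 'a \<Rightarrow> real" and f :: "'i \<Rightarrow> real \<Rightarrow> real"
  assumes "finite I" and [measurable]: "\<And>i. X i \<in> borel_measurable M" "Y \<in> borel_measurable M"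
    and indep: "indep_vars (\<lambda>_. borel) X I"
    and ident: "\<And>i. i \<in> I \<Longrightarrow> distr M borel (X i) = distr M borel Y"
    and f_meas[measurable]: "\<And>i. f i \<in> borel_measurable borel"
  shows "(\<integral>\<^sup>+\<omega>. (\<Prod>i\<in>I. ennreal (f i (X i \<omega>))) \<partial>M) = (\<Prod>i\<in>I. \<integral>\<^sup>+\<omega>. ennreal (f i (Y \<omega>)) \<partial>M)"
proof -
  have "indep_vars (\<lambda>_. borel) (\<lambda>i \<omega>. ennreal (f i (X i \<omega>))) I"
    using indep by (rule indep_vars_compose2[where Y="\<lambda>i x. ennreal (f i x)"]) measurable
  then have "(\<integral>\<^sup>+\<omega>. (\<Prod>i\<in>I. ennreal (f i (X i \<omega>))) \<partial>M) = (\<Prod>i\<in>I. \<integral>\<^sup>+\<omega>. ennreal (f i (X i \<omega>)) \<partial>M)"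
    using \<open>finite I\<close> by (intro indep_vars_nn_integral) auto
  also have "\<dots> = (\<Prod>i\<in>I. \<integral>\<^sup>+\<omega>. ennreal (f i (Y \<omega>)) \<partial>M)"
  proof (rule prod.cong)
    fix i assume "i \<in> I"
    have "(\<integral>\<^sup>+\<omega>. ennreal (f i (X i \<omega>)) \<partial>M) = (\<integral>\<^sup>+x. ennreal (f i x) \<partial>distr M borel (X i))"
      by (simp add: nn_integral_distr)
    also have "\<dots> = (\<integral>\<^sup>+\<omega>. ennreal (f i (Y \<omega>)) \<partial>M)"
      using ident[OF \<open>i \<in> I\<close>] by (simp add: nn_integral_distr)
    finally show "(\<integral>\<^sup>+\<omega>. ennreal (f i (X i \<omega>)) \<partial>M) = (\<integral>\<^sup>+\<omega>. ennreal (f i (Y \<omega>)) \<partial>M)" .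
  qed simp
  finally show ?thesis .
qed

lemma (in prob_space) nn_integral_normalized_ratio_le:
  fixes X :: "nat \<Rightarrow> 'a \<Rightarrow> real" and \<gamma> :: "nat \<Rightarrow> nat"
  assumes [measurable]: "\<And>i. X i \<in> borel_measurable M"
    and indep: "indep_vars (\<lambda>_. borel) X UNIV"
    and ident: "\<And>i. distr M borel (X i) = distr M borel (X 0)"
    and pos: "\<And>i \<omega>. \<omega> \<in> space M \<Longrightarrow> 0 < X i \<omega>"
    and "1 \<le> r" "r < n" and \<gamma>sum: "(\<Sum>i=1..r. \<gamma> i) = p" and "0 < t"
    and mom: "\<And>i. i \<in> {1..r} \<Longrightarrow> (\<integral>\<^sup>+\<omega>. ennreal (X 0 \<omega> ^ \<gamma> i) \<partial>M) \<le> ennreal B"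
    and lap: "(\<integral>\<^sup>+\<omega>. ennreal (exp (- t * X 0 \<omega>)) \<partial>M) \<le> ennreal \<phi>"
    and "0 \<le> B" "0 \<le> \<phi>"
  shows "(\<integral>\<^sup>+ \<omega>. ennreal ((\<Prod>i=1..r. X i \<omega> ^ (2 * \<gamma> i)) /
            ((\<Sum>i=1..r. X i \<omega>) / real n + (\<Sum>i=r+1..n. X i \<omega>) / real n) ^ p) \<partial>M)
    \<le> 2 ^ p * (\<integral>\<^sup>+ \<omega>. ennreal ((\<Prod>i=1..r. X i \<omega> ^ (2 * \<gamma> i)) /
            ((\<Sum>i=1..r. X i \<omega>) / real n + 1) ^ p) \<partial>M)
      + ennreal (real n ^ p * exp (t * n / 2) * B ^ r * \<phi> ^ (n - r))"
proof -
  define L where "L \<omega> = (\<Prod>i=1..r. X i \<omega> ^ (2 * \<gamma> i)) /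
      ((\<Sum>i=1..r. X i \<omega>) / real n + (\<Sum>i=r+1..n. X i \<omega>) / real n) ^ p" for \<omega>
  define A where "A \<omega> = (\<Prod>i=1..r. X i \<omega> ^ (2 * \<gamma> i)) / ((\<Sum>i=1..r. X i \<omega>) / real n + 1) ^ p" for \<omega>
  define f where "f i x = (if i \<le> r then x ^ \<gamma> i else exp (- t * x))" for i x
  define c where "c = real n ^ p * exp (t * n / 2)"
  have f_meas[measurable]: "f i \<in> borel_measurable borel" for i
    unfolding f_def by measurable
  have split: "{1..n} = {1..r} \<union> {r+1..n}" using \<open>r < n\<close> by auto
  have pointwise: "ennreal (L \<omega>) \<le> 2 ^ p * ennreal (A \<omega>) + ennreal c * (\<Prod>i\<in>{1..n}. ennreal (f i (X i \<omega>)))"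
    if "\<omega> \<in> space M" for \<omega>
  proof -
    have x: "0 < X i \<omega>" for i using pos that .
    have "L \<omega> \<le> 2 ^ p * A \<omega> + c * ((\<Prod>i=1..r. X i \<omega> ^ \<gamma> i) * exp (- t * (\<Sum>i=r+1..n. X i \<omega>)))"
      unfolding L_def A_def c_def
      using prod_power_double_le[of "{1..r}" "\<lambda>i. X i \<omega>" \<gamma>] x \<open>1 \<le> r\<close> \<open>r < n\<close> \<open>0 < t\<close> \<gamma>sum
      by (intro ratio_tail_split_le) (auto simp: less_imp_le prod_nonneg sum_nonneg intro!: sum_pos)
    also have "(\<Prod>i=1..r. X i \<omega> ^ \<gamma> i) * exp (- t * (\<Sum>i=r+1..n. X i \<omega>)) = (\<Prod>i\<in>{1..n}. f i (X i \<omega>))"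
      unfolding split by (simp add: prod.union_disjoint f_def exp_sum sum_distrib_left)
    finally have "ennreal (L \<omega>) \<le> ennreal (2 ^ p * A \<omega> + c * (\<Prod>i\<in>{1..n}. f i (X i \<omega>)))"
      by (rule ennreal_leI)
    moreover have "0 \<le> A \<omega>" "0 \<le> c" "\<And>i. 0 \<le> f i (X i \<omega>)"
      using x by (auto simp: A_def c_def f_def less_imp_le
          intro!: divide_nonneg_nonneg prod_nonneg sum_nonneg add_nonneg_nonneg zero_le_power)
    ultimately show ?thesis
      by (simp add: ennreal_plus ennreal_mult ennreal_power[symmetric] prod_nonneg prod_ennreal)
  qed
  have A_meas[measurable]: "A \<in> borel_measurable M" unfolding A_def by measurable
  have "(\<integral>\<^sup>+\<omega>. ennreal (L \<omega>) \<partial>M)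
      \<le> (\<integral>\<^sup>+\<omega>. 2 ^ p * ennreal (A \<omega>) + ennreal c * (\<Prod>i\<in>{1..n}. ennreal (f i (X i \<omega>))) \<partial>M)"
    by (intro nn_integral_mono pointwise)
  also have "\<dots> = 2 ^ p * (\<integral>\<^sup>+\<omega>. ennreal (A \<omega>) \<partial>M)
      + ennreal c * (\<integral>\<^sup>+\<omega>. (\<Prod>i\<in>{1..n}. ennreal (f i (X i \<omega>))) \<partial>M)"
    by (simp add: nn_integral_add nn_integral_cmult)
  also have "(\<integral>\<^sup>+\<omega>. (\<Prod>i\<in>{1..n}. ennreal (f i (X i \<omega>))) \<partial>M) = (\<Prod>i\<in>{1..n}. \<integral>\<^sup>+\<omega>. ennreal (f i (X 0 \<omega>)) \<partial>M)"
    using indep_vars_subset[OF indep] ident by (intro nn_integral_prod_identically_distributed) auto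
  also have "\<dots> \<le> (\<Prod>i\<in>{1..n}. ennreal (if i \<le> r then B else \<phi>))"
    using mom lap by (intro prod_mono_ennreal) (auto simp: f_def)
  also have "\<dots> = ennreal (B ^ r * \<phi> ^ (n - r))"
    unfolding split using \<open>0 \<le> B\<close> \<open>0 \<le> \<phi>\<close>
    by (simp add: prod.union_disjoint ennreal_mult ennreal_power)
  finally show ?thesis
    using \<open>0 \<le> B\<close> \<open>0 \<le> \<phi>\<close> by (simp add: L_def A_def c_def ennreal_mult[symmetric] mult.assoc
        mult_left_mono)
qed

theorem lemma4:
  fixes M :: "'a measure" and X :: "nat \<Rightarrow> 'a \<Rightarrow> real"
    and p r :: nat and \<gamma> :: "nat \<Rightarrow> nat"
  assumes "prob_space M"
    and meas: "\<And>i. X i \<in> borel_measurable M"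
    and indep: "prob_space.indep_vars M (\<lambda>_. borel) X UNIV"
    and ident: "\<And>i. distr M borel (X i) = distr M borel (X 0)"
    and pos: "\<And>i \<omega>. \<omega> \<in> space M \<Longrightarrow> X i \<omega> > 0"
    and int1: "integrable M (X 0)" and mean: "prob_space.expectation M (X 0) = 1"
    and p2: "p \<ge> 2"
    and intp: "integrable M (\<lambda>\<omega>. X 0 \<omega> ^ p)"
    and r: "1 \<le> r" "r \<le> p"
    and \<gamma>pos: "\<And>i. i \<in> {1..r} \<Longrightarrow> \<gamma> i > 0"
    and \<gamma>sum: "(\<Sum>i=1..r. \<gamma> i) = p"
  shows "\<exists>e :: nat \<Rightarrow> real. e \<longlonglongrightarrow> 0 \<and>
    (\<forall>\<^sub>F n in sequentially.
      (\<integral>\<^sup>+ \<omega>. ennreal ((\<Prod>i=1..r. X i \<omega> ^ (2 * \<gamma> i)) /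
            ((\<Sum>i=1..r. X i \<omega>) / real n + (\<Sum>i=r+1..n. X i \<omega>) / real n) ^ p) \<partial>M)
      \<le> 4 ^ p * (\<integral>\<^sup>+ \<omega>. ennreal ((\<Prod>i=1..r. X i \<omega> ^ (2 * \<gamma> i)) /
            ((\<Sum>i=1..r. X i \<omega>) / real n + 1) ^ p) \<partial>M) + ennreal (e n))"
proof -
  interpret prob_space M by fact
  have X0_nonneg: "\<And>\<omega>. \<omega> \<in> space M \<Longrightarrow> 0 \<le> X 0 \<omega>" using pos less_imp_le by blast
  define m2 where "m2 = expectation (\<lambda>\<omega>. X 0 \<omega> ^ 2)"
  define B where "B = 1 + expectation (\<lambda>\<omega>. X 0 \<omega> ^ p)"
  define t where "t = 1 / (2 * (m2 + 1))"
  have "0 \<le> m2" unfolding m2_def by simp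
  then have "0 < t" and "t * m2 \<le> 1/2" unfolding t_def by (simp_all add: field_simps)
  have "0 \<le> B" unfolding B_def using X0_nonneg by (simp add: integral_nonneg_AE)
  have lap: "(\<integral>\<^sup>+\<omega>. ennreal (exp (- t * X 0 \<omega>)) \<partial>M) \<le> ennreal (exp (- (3 * t / 4)))"
    using meas \<open>0 < t\<close> \<open>t * m2 \<le> 1/2\<close> unfolding m2_def
    by (intro nn_integral_exp_neg_le_mean_one X0_nonneg int1 mean
        integrable_power_le[OF meas intp X0_nonneg p2]) auto
  have mom: "(\<integral>\<^sup>+\<omega>. ennreal (X 0 \<omega> ^ \<gamma> i) \<partial>M) \<le> ennreal B" if "i \<in> {1..r}" for i
  proof -
    have "\<gamma> i \<le> p" unfolding \<gamma>sum[symmetric] using that by (intro member_le_sum) auto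
    then show ?thesis unfolding B_def using meas intp X0_nonneg by (intro nn_integral_power_le) auto
  qed
  show ?thesis
    using LIMSEQ_power_mult_exp_decay[OF \<open>0 < t\<close>, of p "B ^ r" r]
    by (intro exI[of _ "\<lambda>n. real n ^ p * exp (t * n / 2) * B ^ r * exp (- (3 * t / 4)) ^ (n - r)"]
        conjI eventually_mono[OF eventually_gt_at_top[of r]]
        order_trans[OF nn_integral_normalized_ratio_le[OF meas indep ident pos r(1) _ \<gamma>sum \<open>0 < t\<close> mom lap \<open>0 \<le> B\<close>]])
      (auto intro!: add_mono mult_right_mono power_mono)
qed

end
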